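(* Let $[t_0,t_1]$ be an admissible segment of $\mathbf r$. For $t\in(t_0,t_1]$ let $\mathbf r_0\,\mathbf r_1(t)\,\mathbf r_2(t)\,\mathbf r_3(t)$ be the associated tetrahedron of the sub-segment $[t_0,t]$. Then the edge lengths $\|\mathbf r_0\mathbf r_1(t)\|$, $\|\mathbf r_1(t)\mathbf r_2(t)\|$, $\|\mathbf r_2(t)\mathbf r_3(t)\|$ all tend to $0$ as $t\to t_0^+$ (equivalently, as the arc length of $\mathbf r|_{[t_0,t]}$ tends to $0$).
   Context: Setting: $\mathbf r(t)=(x(t),y(t),z(t))$ with $x,y,z$ rational functions with real coefficients whose denominators do not vanish on the parameter interval, properly parametrized, and not contained in a plane. Curvature $\kappa=\|\mathbf r'\times\mathbf r''\|/\|\mathbf r'\|^3$; torsion $\tau$ vanishes exactly where $\det(\mathbf r',\mathbf r'',\mathbf r''')=0$. Unit tangent $\boldsymbol\alpha=\mathbf r'/\|\mathbf r'\|$, unit binormal $\boldsymbol\gamma=\mathbf r'\times\mathbf r''/\|\mathbf r'\times\mathbf r''\|$; one-sided limits $\boldsymbol\alpha^{\pm}(s)=\lim_{t\to s^\pm}\boldsymbol\alpha(t)$, $\boldsymbol\gamma^{\pm}(s)=\lim_{t\to s^\pm}\boldsymbol\gamma(t)$; tangent lines $T^{\pm}(s)=\{\mathbf r(s)+\lambda\boldsymbol\alpha^{\pm}(s)\}$, osculating planes $O^{\pm}(s)=\{X:(X-\mathbf r(s))\cdot\boldsymbol\gamma^{\pm}(s)=0\}$. A point is singular if it corresponds to more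 than one parameter counted with multiplicity; character points are singular points, inflections ($\kappa=0$) and torsion-vanishing points ($\tau=0$). Associated tetrahedron of $[a,b]$: vertices $\mathbf r(a)$, $T^+(a)\cap L$, $T^-(b)\cap L$, $\mathbf r(b)$ where $L=O^+(a)\cap O^-(b)$. Admissible segment: $t_0<t_1$, no parameter in $(t_0,t_1]$ gives a character point, and for all $t_0\le s_1<s_2\le t_1$: (I) $\boldsymbol\alpha^+(s_1)\cdot\boldsymbol\gamma^-(s_2)\ne0$ and $\boldsymbol\alpha^-(s_2)\cdot\boldsymbol\gamma^+(s_1)\ne0$; (II) $(\boldsymbol\alpha^+(s_1)\times(\mathbf r(s_2)-\mathbf r(s_1)))\cdot\boldsymbol\alpha^-(s_2)\ne0$; (III) $(\mathbf r(s_1)-\mathbf r(s_2))\cdot\boldsymbol\gamma^-(s_2)\ne0$ and $(\mathbf r(s_2)-\mathbf r(s_1))\cdot\boldsymbol\gamma^+(s_1)\ne0$; and (IV) for all $t_0\le s_1<s_2<s_3\le t_1$, $\det(\boldsymbol\alpha(s_1),\boldsymbol\alpha(s_2),\boldsymbol\alpha(s_3))\ne0$ (one-sided limits used at $t_0,t_1$). *)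

theory Defs
  imports "HOL-Analysis.Analysis" "HOL-Computational_Algebra.Polynomial"
begin

definition rcurve :: "(3 \<Rightarrow> real poly) \<Rightarrow> (3 \<Rightarrow> real poly) \<Rightarrow> real \<Rightarrow> real^3" where
  "rcurve P Q t = (\<chi> i. poly (P i) t / poly (Q i) t)"

definition rcurveC :: "(3 \<Rightarrow> real poly) \<Rightarrow> (3 \<Rightarrow> real poly) \<Rightarrow> complex \<Rightarrow> complex^3" where
  "rcurveC P Q z = (\<chi> i. poly (map_poly complex_of_real (P i)) z / poly (map_poly complex_of_real (Q i)) z)"

definition denoms_nonzeroC :: "(3 \<Rightarrow> real poly) \<Rightarrow> complex \<Rightarrow> bool" where
  "denoms_nonzeroC Q z \<longleftrightarrow> (\<forall>i. poly (map_poly complex_of_real (Q i)) z \<noteq> 0)"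

text \<open>Proper parametrization: generically injective (over the complex parameter line).\<close>

definition proper_param :: "(3 \<Rightarrow> real poly) \<Rightarrow> (3 \<Rightarrow> real poly) \<Rightarrow> bool" where
  "proper_param P Q \<longleftrightarrow>
     finite {z. denoms_nonzeroC Q z \<and>
               (\<exists>w. w \<noteq> z \<and> denoms_nonzeroC Q w \<and> rcurveC P Q w = rcurveC P Q z)}"

definition admissible_curve :: "(3 \<Rightarrow> real poly) \<Rightarrow> (3 \<Rightarrow> real poly) \<Rightarrow> real set \<Rightarrow> bool" where
  "admissible_curve P Q I \<longleftrightarrow>
     is_interval I \<and>
     (\<forall>t\<in>I. \<forall>i. poly (Q i) t \<noteq> 0) \<and>
     proper_param P Q \<and>
     \<not> (\<exists>n c. n \<noteq> 0 \<and> (\<forall>t\<in>I. n \<bullet> rcurve P Q t = c))"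

definition d1 :: "(real \<Rightarrow> real^3) \<Rightarrow> real \<Rightarrow> real^3" where
  "d1 r t = vector_derivative r (at t)"

definition d2 :: "(real \<Rightarrow> real^3) \<Rightarrow> real \<Rightarrow> real^3" where
  "d2 r t = vector_derivative (d1 r) (at t)"

definition d3 :: "(real \<Rightarrow> real^3) \<Rightarrow> real \<Rightarrow> real^3" where
  "d3 r t = vector_derivative (d2 r) (at t)"

definition utangent :: "(real \<Rightarrow> real^3) \<Rightarrow> real \<Rightarrow> real^3" where
  "utangent r t = d1 r t /\<^sub>R norm (d1 r t)"

definition ubinormal :: "(real \<Rightarrow> real^3) \<Rightarrow> real \<Rightarrow> real^3" where
  "ubinormal r t = cross3 (d1 r t) (d2 r t) /\<^sub>R norm (cross3 (d1 r t) (d2 r t))"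

definition alpha_plus :: "(real \<Rightarrow> real^3) \<Rightarrow> real \<Rightarrow> real^3" where
  "alpha_plus r s = Lim (at_right s) (utangent r)"

definition alpha_minus :: "(real \<Rightarrow> real^3) \<Rightarrow> real \<Rightarrow> real^3" where
  "alpha_minus r s = Lim (at_left s) (utangent r)"

definition gamma_plus :: "(real \<Rightarrow> real^3) \<Rightarrow> real \<Rightarrow> real^3" where
  "gamma_plus r s = Lim (at_right s) (ubinormal r)"

definition gamma_minus :: "(real \<Rightarrow> real^3) \<Rightarrow> real \<Rightarrow> real^3" where
  "gamma_minus r s = Lim (at_left s) (ubinormal r)"

definition tangent_plus :: "(real \<Rightarrow> real^3) \<Rightarrow> real \<Rightarrow> (real^3) set" where
  "tangent_plus r s = {r s + l *\<^sub>R alpha_plus r s | l. True}"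

definition tangent_minus :: "(real \<Rightarrow> real^3) \<Rightarrow> real \<Rightarrow> (real^3) set" where
  "tangent_minus r s = {r s + l *\<^sub>R alpha_minus r s | l. True}"

definition osc_plus :: "(real \<Rightarrow> real^3) \<Rightarrow> real \<Rightarrow> (real^3) set" where
  "osc_plus r s = {X. (X - r s) \<bullet> gamma_plus r s = 0}"

definition osc_minus :: "(real \<Rightarrow> real^3) \<Rightarrow> real \<Rightarrow> (real^3) set" where
  "osc_minus r s = {X. (X - r s) \<bullet> gamma_minus r s = 0}"

text \<open>Singular point: the point corresponds to more than one parameter counted with
  multiplicity, i.e. either the parameter itself has multiplicity at least 2 (r'(t) = 0),
  or another (possibly complex) parameter gives the same point.\<close>

definition singular_param :: "(3 \<Rightarrow> real poly) \<Rightarrow> (3 \<Rightarrow> real poly) \<Rightarrow> real \<Rightarrow> bool" where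
  "singular_param P Q t \<longleftrightarrow>
     d1 (rcurve P Q) t = 0 \<or>
     (\<exists>z. z \<noteq> complex_of_real t \<and> denoms_nonzeroC Q z \<and>
          rcurveC P Q z = rcurveC P Q (complex_of_real t))"

definition inflection_param :: "(real \<Rightarrow> real^3) \<Rightarrow> real \<Rightarrow> bool" where
  "inflection_param r t \<longleftrightarrow>
     norm (cross3 (d1 r t) (d2 r t)) / norm (d1 r t) ^ 3 = 0"

definition torsion_zero_param :: "(real \<Rightarrow> real^3) \<Rightarrow> real \<Rightarrow> bool" where
  "torsion_zero_param r t \<longleftrightarrow> det (vector [d1 r t, d2 r t, d3 r t] :: real^3^3) = 0"

definition character_param :: "(3 \<Rightarrow> real poly) \<Rightarrow> (3 \<Rightarrow> real poly) \<Rightarrow> real \<Rightarrow> bool" where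
  "character_param P Q t \<longleftrightarrow>
     singular_param P Q t \<or> inflection_param (rcurve P Q) t \<or>
     torsion_zero_param (rcurve P Q) t"

definition alpha_seg :: "(real \<Rightarrow> real^3) \<Rightarrow> real \<Rightarrow> real \<Rightarrow> real \<Rightarrow> real^3" where
  "alpha_seg r t0 t1 s =
     (if s = t0 then alpha_plus r t0 else if s = t1 then alpha_minus r t1 else utangent r s)"

definition admissible_segment ::
  "(3 \<Rightarrow> real poly) \<Rightarrow> (3 \<Rightarrow> real poly) \<Rightarrow> real set \<Rightarrow> real \<Rightarrow> real \<Rightarrow> bool" where
  "admissible_segment P Q I t0 t1 \<longleftrightarrow>
     (let r = rcurve P Q in
      t0 < t1 \<and> {t0..t1} \<subseteq> I \<and>
      (\<forall>t\<in>{t0<..t1}. \<not> character_param P Q t) \<and>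
      (\<forall>s1 s2. t0 \<le> s1 \<and> s1 < s2 \<and> s2 \<le> t1 \<longrightarrow>
         alpha_plus r s1 \<bullet> gamma_minus r s2 \<noteq> 0 \<and>
         alpha_minus r s2 \<bullet> gamma_plus r s1 \<noteq> 0 \<and>
         cross3 (alpha_plus r s1) (r s2 - r s1) \<bullet> alpha_minus r s2 \<noteq> 0 \<and>
         (r s1 - r s2) \<bullet> gamma_minus r s2 \<noteq> 0 \<and>
         (r s2 - r s1) \<bullet> gamma_plus r s1 \<noteq> 0) \<and>
      (\<forall>s1 s2 s3. t0 \<le> s1 \<and> s1 < s2 \<and> s2 < s3 \<and> s3 \<le> t1 \<longrightarrow>
         det (vector [alpha_seg r t0 t1 s1, alpha_seg r t0 t1 s2, alpha_seg r t0 t1 s3]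
               :: real^3^3) \<noteq> 0))"

text \<open>Associated tetrahedron of [a,b]: vertices r(a), T+(a) \<inter> L, T-(b) \<inter> L, r(b),
  where L = O+(a) \<inter> O-(b).\<close>

definition tet_L :: "(real \<Rightarrow> real^3) \<Rightarrow> real \<Rightarrow> real \<Rightarrow> (real^3) set" where
  "tet_L r a b = osc_plus r a \<inter> osc_minus r b"

definition tet_v1 :: "(real \<Rightarrow> real^3) \<Rightarrow> real \<Rightarrow> real \<Rightarrow> real^3" where
  "tet_v1 r a b = (THE X. X \<in> tangent_plus r a \<inter> tet_L r a b)"

definition tet_v2 :: "(real \<Rightarrow> real^3) \<Rightarrow> real \<Rightarrow> real \<Rightarrow> real^3" where
  "tet_v2 r a b = (THE X. X \<in> tangent_minus r b \<inter> tet_L r a b)"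

end

theory Submission
  imports Defs
begin

(* The vertices r1(t), r2(t) are found by intersecting a tangent line with an osculating
   plane, so each outer edge length is a ratio of inner products with the binormal
   (tet_v1_eq, tet_v2_eq).  Both numerator and denominator of these ratios tend to 0, so
   their limits require the local expansion of the curve at t0.

   For a rational curve, D(t)(r(t) - r(t0)) is a polynomial vector (D the product of
   the denominators).  Non-planarity makes its Taylor coefficients span space, so one
   can choose Taylor coefficients b1, b2, b3 of indices p < q < s forming a frame in which
   the chord has coordinates of exact orders h^p, h^q, h^s, h = t - t0 (adapted_frame_exists).
   Jets of these coordinates (monomial_mult_has_jet) give, inside the locale adapted_frame,
   the one-sided limits of the unit tangent and binormal and show that both ratios are
   O(h^p).  The middle edge then follows from the triangle inequality and continuity. *)

unbundle cross3_syntax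


section \<open>Rational functions of one real variable\<close>

definition ratfun :: "real poly \<times> real poly \<Rightarrow> real \<Rightarrow> real" where
  "ratfun AB t = poly (fst AB) t / poly (snd AB) t"

definition ratfun_deriv :: "real poly \<times> real poly \<Rightarrow> real poly \<times> real poly" where
  "ratfun_deriv AB = (pderiv (fst AB) * snd AB - fst AB * pderiv (snd AB), snd AB * snd AB)"

lemma ratfun_deriv_denom_nonzero:
  "poly (snd AB) t \<noteq> 0 \<Longrightarrow> poly (snd ((ratfun_deriv ^^ k) AB)) t \<noteq> 0"
  by (induction k) (auto simp: ratfun_deriv_def)

lemma ratfun_has_derivative:
  "poly (snd AB) t \<noteq> 0 \<Longrightarrow> (ratfun AB has_real_derivative ratfun (ratfun_deriv AB) t) (at t)"
  unfolding ratfun_def ratfun_deriv_def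
  by (rule derivative_eq_intros poly_DERIV refl | assumption)+
     (simp add: field_simps power2_eq_square)

lemma ratfun_isCont: "poly (snd AB) t \<noteq> 0 \<Longrightarrow> isCont (ratfun AB) t"
  using ratfun_has_derivative DERIV_isCont by blast

lemma has_vector_derivative_vec:
  fixes f :: "'n::finite \<Rightarrow> real \<Rightarrow> real"
  assumes "\<And>i. (f i has_real_derivative f' i) (at t)"
  shows "((\<lambda>t. \<chi> i. f i t) has_vector_derivative (\<chi> i. f' i)) (at t)"
proof -
  have vec_sum: "(\<chi> i. g i) = (\<Sum>i\<in>UNIV. g i *\<^sub>R axis i (1::real))" for g :: "'n \<Rightarrow> real"
    by (simp add: vec_eq_iff sum_component axis_def if_distrib cong: if_cong)
  show ?thesis
    unfolding vec_sum
    by (intro has_vector_derivative_sum has_vector_derivative_scaleR[where g' = 0, simplified])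
       (use assms in \<open>auto simp: has_real_derivative_iff_has_vector_derivative\<close>)
qed


definition curve_deriv :: "(3 \<Rightarrow> real poly) \<Rightarrow> (3 \<Rightarrow> real poly) \<Rightarrow> nat \<Rightarrow> real \<Rightarrow> real^3" where
  "curve_deriv P Q k t = (\<chi> i. ratfun ((ratfun_deriv ^^ k) (P i, Q i)) t)"

definition regular_params :: "(3 \<Rightarrow> real poly) \<Rightarrow> real set" where
  "regular_params Q = {t. \<forall>i. poly (Q i) t \<noteq> 0}"

lemma open_regular_params: "open (regular_params Q)"
proof -
  have "regular_params Q = {t. (\<Prod>i\<in>UNIV. poly (Q i) t) \<noteq> 0}"
    unfolding regular_params_def by auto
  then show ?thesis by (simp only:) (intro open_Collect_neq continuous_intros)
qed

lemma curve_deriv_0: "curve_deriv P Q 0 = rcurve P Q"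
  by (simp add: fun_eq_iff rcurve_def curve_deriv_def ratfun_def)

lemma curve_deriv_has_derivative:
  "t \<in> regular_params Q \<Longrightarrow>
     (curve_deriv P Q k has_vector_derivative curve_deriv P Q (Suc k) t) (at t)"
  unfolding curve_deriv_def
  by (intro has_vector_derivative_vec)
     (auto intro!: ratfun_has_derivative ratfun_deriv_denom_nonzero simp: regular_params_def)

lemma curve_deriv_isCont: "t \<in> regular_params Q \<Longrightarrow> isCont (curve_deriv P Q k) t"
  using curve_deriv_has_derivative has_vector_derivative_continuous by blast

lemma d1_rcurve: "t \<in> regular_params Q \<Longrightarrow> d1 (rcurve P Q) t = curve_deriv P Q 1 t"
  unfolding d1_def curve_deriv_0[symmetric]
  using curve_deriv_has_derivative[of t Q P 0] vector_derivative_at by simp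

lemma d2_rcurve: "t \<in> regular_params Q \<Longrightarrow> d2 (rcurve P Q) t = curve_deriv P Q 2 t"
proof -
  assume t: "t \<in> regular_params Q"
  have "(curve_deriv P Q 1 has_vector_derivative curve_deriv P Q 2 t) (at t)"
    using curve_deriv_has_derivative[OF t, of P 1] by (simp add: numeral_2_eq_2)
  then have "(d1 (rcurve P Q) has_vector_derivative curve_deriv P Q 2 t) (at t)"
    by (rule has_vector_derivative_transform_within_open[OF _ open_regular_params t])
       (simp add: d1_rcurve)
  then show ?thesis unfolding d2_def by (rule vector_derivative_at)
qed


section \<open>Jets: leading-order behaviour at a right endpoint\<close>

text \<open>A function u with derivatives
  u', u'' has a jet of order m with leading coefficient c at t0 if, as t tends to t0
  from the right, u ~ c h^m, u' ~ m c h^(m-1) and u'' ~ m(m-1) c h^(m-2), where h = t - t0.\<close>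

definition rescale :: "real \<Rightarrow> nat \<Rightarrow> nat \<Rightarrow> (real \<Rightarrow> real) \<Rightarrow> real \<Rightarrow> real" where
  "rescale t0 k m u t = (t - t0)^k * u t / (t - t0)^m"

definition has_jet ::
  "real \<Rightarrow> nat \<Rightarrow> real \<Rightarrow> (real \<Rightarrow> real) \<Rightarrow> (real \<Rightarrow> real) \<Rightarrow> (real \<Rightarrow> real) \<Rightarrow> bool" where
  "has_jet t0 m c u u' u'' \<longleftrightarrow>
     (rescale t0 0 m u \<longlongrightarrow> c) (at_right t0) \<and>
     (rescale t0 1 m u' \<longlongrightarrow> real m * c) (at_right t0) \<and>
     (rescale t0 2 m u'' \<longlongrightarrow> real m * (real m - 1) * c) (at_right t0)"

lemma rescale_lower_order:
  "t \<noteq> t0 \<Longrightarrow> m \<le> n \<Longrightarrow> rescale t0 k m u t = rescale t0 k n u t * (t - t0)^(n - m)"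
  by (simp add: rescale_def power_diff)

lemma tendsto_power_at_right_zero: "0 < n \<Longrightarrow> ((\<lambda>t. (t - t0)^n) \<longlongrightarrow> (0::real)) (at_right t0)"
  by (intro tendsto_null_power) (auto intro!: tendsto_eq_intros)

lemma has_jet_divide:
  assumes "has_jet t0 m c u u' u''"
  shows "has_jet t0 m (c / d) (\<lambda>t. u t / d) (\<lambda>t. u' t / d) (\<lambda>t. u'' t / d)"
proof -
  have scale: "rescale t0 k m (\<lambda>t. v t / d) = (\<lambda>t. rescale t0 k m v t / d)" for k v
    by (simp add: fun_eq_iff rescale_def)
  have div: "(f \<longlongrightarrow> l) F \<Longrightarrow> ((\<lambda>t. f t / d) \<longlongrightarrow> l / d) F" for f l and F :: "real filter"
    by (simp add: divide_inverse tendsto_mult_right)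
  show ?thesis
    using assms unfolding has_jet_def scale
    by (metis div times_divide_eq_right)
qed

lemma monomial_mult_deriv:
  assumes "(V has_real_derivative V') (at t)"
  shows "((\<lambda>s. (s - t0)^m * V s) has_real_derivative
           real m * (t - t0)^(m - 1) * V t + (t - t0)^m * V') (at t)"
  using assms by (auto intro!: derivative_eq_intros)

lemma leibniz_monomial_mult:
  fixes x x' x'' X X' X'' :: "real \<Rightarrow> real"
  assumes S: "open S" "t \<in> S" and p: "1 \<le> p"
    and X': "\<And>s. s \<in> S \<Longrightarrow> (X has_real_derivative X' s) (at s)"
    and X'': "\<And>s. s \<in> S \<Longrightarrow> (X' has_real_derivative X'' s) (at s)"
    and x: "\<And>s. s \<in> S \<Longrightarrow> x s = (s - t0)^p * X s"
    and x': "\<And>s. s \<in> S \<Longrightarrow> (x has_real_derivative x' s) (at s)"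
    and x'': "\<And>s. s \<in> S \<Longrightarrow> (x' has_real_derivative x'' s) (at s)"
  shows "(t - t0) * x' t = (t - t0)^p * (real p * X t + (t - t0) * X' t)"
    and "(t - t0)^2 * x'' t = (t - t0)^p *
           (real p * (real p - 1) * X t + 2 * real p * (t - t0) * X' t + (t - t0)^2 * X'' t)"
proof -
  obtain m where pm: "p = Suc m" using p by (cases p) auto
  define W where "W s = real p * X s + (s - t0) * X' s" for s
  define W' where "W' s = real p * X' s + (X' s + (s - t0) * X'' s)" for s
  have W': "(W has_real_derivative W' s) (at s)" if "s \<in> S" for s
    unfolding W_def W'_def
    using X'[OF that] X''[OF that] by (auto intro!: derivative_eq_intros)
  have x'_eq: "x' s = (s - t0)^m * W s" if s: "s \<in> S" for s
  proof -
    have "((\<lambda>s. (s - t0)^p * X s) has_real_derivative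
            real p * (s - t0)^m * X s + (s - t0)^p * X' s) (at s)"
      using monomial_mult_deriv[OF X'[OF s], of t0 p] pm by simp
    then have "(x has_real_derivative real p * (s - t0)^m * X s + (s - t0)^p * X' s) (at s)"
      by (rule has_field_derivative_transform_within_open[OF _ S(1) s]) (simp add: x)
    then have "x' s = real p * (s - t0)^m * X s + (s - t0)^p * X' s"
      using x'[OF s] DERIV_unique by blast
    then show ?thesis unfolding W_def pm by (simp add: algebra_simps)
  qed
  have "(x' has_real_derivative real m * (t - t0)^(m - 1) * W t + (t - t0)^m * W' t) (at t)"
    by (intro has_field_derivative_transform_within_open[OF monomial_mult_deriv[OF W'[OF S(2)]] S])
       (simp add: x'_eq)
  then have x''_eq: "x'' t = real m * (t - t0)^(m - 1) * W t + (t - t0)^m * W' t"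
    using x''[OF S(2)] DERIV_unique by blast
  have second_order: "h^2 * (real m * h^(m - 1) * a + h^m * b) = h^p * ((real p - 1) * a + h * b)"
    for h a b :: real
    unfolding pm by (cases m) (simp_all add: algebra_simps power2_eq_square)
  show "(t - t0) * x' t = (t - t0)^p * (real p * X t + (t - t0) * X' t)"
    unfolding x'_eq[OF S(2)] W_def pm by simp
  show "(t - t0)^2 * x'' t = (t - t0)^p *
      (real p * (real p - 1) * X t + 2 * real p * (t - t0) * X' t + (t - t0)^2 * X'' t)"
    unfolding x''_eq second_order unfolding W_def W'_def by (simp add: algebra_simps power2_eq_square)
qed

lemma monomial_mult_has_jet:
  fixes x x' x'' X X' X'' :: "real \<Rightarrow> real"
  assumes S: "open S" "t0 \<in> S" and p: "1 \<le> p"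
    and X': "\<And>t. t \<in> S \<Longrightarrow> (X has_real_derivative X' t) (at t)"
    and X'': "\<And>t. t \<in> S \<Longrightarrow> (X' has_real_derivative X'' t) (at t)"
    and cont: "isCont X'' t0"
    and x: "\<And>t. t \<in> S \<Longrightarrow> x t = (t - t0)^p * X t"
    and x': "\<And>t. t \<in> S \<Longrightarrow> (x has_real_derivative x' t) (at t)"
    and x'': "\<And>t. t \<in> S \<Longrightarrow> (x' has_real_derivative x'' t) (at t)"
  shows "has_jet t0 p (X t0) x x' x''"
proof -
  note leibniz = leibniz_monomial_mult[OF S(1) _ p X' X'' x x' x'']
  have near: "eventually (\<lambda>t. t \<in> S \<and> t \<noteq> t0) (at_right t0)"
    using eventually_at_in_open[OF S] by (auto simp: eventually_at_filter elim: eventually_mono)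
  have "eventually (\<lambda>t. X t = rescale t0 0 p x t \<and>
      real p * X t + (t - t0) * X' t = rescale t0 1 p x' t \<and>
      real p * (real p - 1) * X t + 2 * real p * (t - t0) * X' t + (t - t0)^2 * X'' t
        = rescale t0 2 p x'' t) (at_right t0)"
    using near by eventually_elim (simp add: rescale_def x leibniz)
  then have eq0: "eventually (\<lambda>t. X t = rescale t0 0 p x t) (at_right t0)"
    and eq1: "eventually (\<lambda>t. real p * X t + (t - t0) * X' t = rescale t0 1 p x' t) (at_right t0)"
    and eq2: "eventually (\<lambda>t. real p * (real p - 1) * X t + 2 * real p * (t - t0) * X' t
        + (t - t0)^2 * X'' t = rescale t0 2 p x'' t) (at_right t0)"
    by (auto elim: eventually_mono)
  have lim: "(f \<longlongrightarrow> f t0) (at_right t0)" if "isCont f t0" for f :: "real \<Rightarrow> real"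
    using that unfolding isCont_def by (rule tendsto_within_subset) simp
  have cX: "isCont X t0" "isCont X' t0"
    using X'[OF S(2)] X''[OF S(2)] by (auto intro: DERIV_isCont)
  have "(X \<longlongrightarrow> X t0) (at_right t0)"
    by (rule lim[OF cX(1)])
  moreover have "((\<lambda>t. real p * X t + (t - t0) * X' t) \<longlongrightarrow> real p * X t0 + 0 * X' t0)
      (at_right t0)"
    by (intro tendsto_intros lim cX) (auto intro!: tendsto_eq_intros)
  moreover have "((\<lambda>t. real p * (real p - 1) * X t + 2 * real p * (t - t0) * X' t + (t - t0)^2 * X'' t)
      \<longlongrightarrow> real p * (real p - 1) * X t0 + 2 * real p * 0 * X' t0 + 0^2 * X'' t0) (at_right t0)"
    by (intro tendsto_intros lim cX cont) (auto intro!: tendsto_eq_intros)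
  ultimately show ?thesis
    unfolding has_jet_def
    using Lim_transform_eventually[OF _ eq0] Lim_transform_eventually[OF _ eq1]
      Lim_transform_eventually[OF _ eq2]
    by simp
qed


section \<open>Taylor coefficients of the chord\<close>

text \<open>With D the product of the denominators, D(t) (r(t) - r(t0)) is a polynomial vector
  in t.  Its Taylor coefficients at t0 are chord_coeff k, and its component along a
  direction n, as a polynomial in h = t - t0, is chord_poly n.\<close>

definition denom_prod :: "(3 \<Rightarrow> real poly) \<Rightarrow> real poly" where
  "denom_prod Q = (\<Prod>i\<in>UNIV. Q i)"

definition chord_numer :: "(3 \<Rightarrow> real poly) \<Rightarrow> (3 \<Rightarrow> real poly) \<Rightarrow> real \<Rightarrow> 3 \<Rightarrow> real poly" where
  "chord_numer P Q t0 i = P i * (\<Prod>j\<in>UNIV-{i}. Q j) - smult (rcurve P Q t0 $ i) (denom_prod Q)"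

definition chord_coeff :: "(3 \<Rightarrow> real poly) \<Rightarrow> (3 \<Rightarrow> real poly) \<Rightarrow> real \<Rightarrow> nat \<Rightarrow> real^3" where
  "chord_coeff P Q t0 k = (\<chi> i. coeff (pcompose (chord_numer P Q t0 i) [:t0, 1:]) k)"

definition chord_poly :: "(3 \<Rightarrow> real poly) \<Rightarrow> (3 \<Rightarrow> real poly) \<Rightarrow> real \<Rightarrow> real^3 \<Rightarrow> real poly" where
  "chord_poly P Q t0 n = (\<Sum>i\<in>UNIV. smult (n $ i) (pcompose (chord_numer P Q t0 i) [:t0, 1:]))"

lemma denom_prod_nonzero: "t \<in> regular_params Q \<Longrightarrow> poly (denom_prod Q) t \<noteq> 0"
  by (simp add: denom_prod_def poly_prod regular_params_def)

lemma chord_numer_eval: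
  assumes t: "t \<in> regular_params Q"
  shows "(\<chi> i. poly (chord_numer P Q t0 i) t) = poly (denom_prod Q) t *\<^sub>R (rcurve P Q t - rcurve P Q t0)"
proof -
  have "poly (chord_numer P Q t0 i) t = poly (denom_prod Q) t * (rcurve P Q t - rcurve P Q t0) $ i" for i
  proof -
    have Qi: "poly (Q i) t \<noteq> 0" using t by (simp add: regular_params_def)
    have "poly (denom_prod Q) t = poly (Q i) t * (\<Prod>j\<in>UNIV-{i}. poly (Q j) t)"
      by (simp add: denom_prod_def poly_prod prod.remove[of UNIV i])
    then show ?thesis using Qi
      by (simp add: chord_numer_def poly_prod rcurve_def field_simps)
  qed
  then show ?thesis by (simp add: vec_eq_iff)
qed

lemma coeff_chord_poly: "coeff (chord_poly P Q t0 n) k = n \<bullet> chord_coeff P Q t0 k"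
  by (simp add: chord_poly_def chord_coeff_def coeff_sum inner_vec_def)

lemma poly_chord_poly:
  assumes t: "t \<in> regular_params Q"
  shows "poly (chord_poly P Q t0 n) (t - t0) = poly (denom_prod Q) t * ((rcurve P Q t - rcurve P Q t0) \<bullet> n)"
proof -
  have "poly (chord_poly P Q t0 n) (t - t0) = n \<bullet> (\<chi> i. poly (chord_numer P Q t0 i) t)"
    by (simp add: chord_poly_def poly_sum poly_pcompose inner_vec_def)
  also have "\<dots> = poly (denom_prod Q) t * ((rcurve P Q t - rcurve P Q t0) \<bullet> n)"
    unfolding chord_numer_eval[OF t] by (simp add: inner_commute)
  finally show ?thesis .
qed

lemma chord_coeff_0: "t0 \<in> regular_params Q \<Longrightarrow> chord_coeff P Q t0 0 = 0"
  using chord_numer_eval[of t0 Q P t0]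
  by (simp add: chord_coeff_def vec_eq_iff poly_0_coeff_0[symmetric] poly_pcompose)

text \<open>Non-planarity: no nonzero direction is orthogonal to all Taylor coefficients, for
  otherwise the curve would lie in a plane.\<close>

lemma chord_coeff_nonplanar:
  assumes adm: "admissible_curve P Q I" and n: "n \<noteq> 0"
  shows "\<exists>k. n \<bullet> chord_coeff P Q t0 k \<noteq> 0"
proof (rule ccontr)
  assume "\<not> ?thesis"
  then have L0: "chord_poly P Q t0 n = 0" by (intro poly_eqI) (simp add: coeff_chord_poly)
  have "n \<bullet> rcurve P Q t = n \<bullet> rcurve P Q t0" if "t \<in> I" for t
  proof -
    have t: "t \<in> regular_params Q"
      using adm that by (auto simp: admissible_curve_def regular_params_def)
    have "poly (denom_prod Q) t * ((rcurve P Q t - rcurve P Q t0) \<bullet> n) = 0"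
      using poly_chord_poly[OF t, of P t0 n] L0 by simp
    then show ?thesis using denom_prod_nonzero[OF t]
      by (simp add: inner_commute inner_diff_right)
  qed
  then show False using adm n unfolding admissible_curve_def by blast
qed

lemma poly_monom_factor:
  fixes L :: "real poly"
  assumes "\<forall>k<m. coeff L k = 0"
  shows "poly L h = h^m * poly (poly_shift m L) h" and "poly (poly_shift m L) 0 = coeff L m"
proof -
  have "L = monom 1 m * poly_shift m L"
    using assms by (intro poly_eqI) (auto simp: coeff_monom_mult coeff_poly_shift)
  then show "poly L h = h^m * poly (poly_shift m L) h"
    by (metis poly_monom poly_mult mult_1)
  show "poly (poly_shift m L) 0 = coeff L m"
    by (simp add: poly_0_coeff_0 coeff_poly_shift)
qed

lemma inner_has_real_derivative:
  fixes f :: "real \<Rightarrow> real^3"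
  assumes "(f has_vector_derivative f') (at t)"
  shows "((\<lambda>t. (f t - c) \<bullet> b) has_real_derivative f' \<bullet> b) (at t)"
proof -
  have "((\<lambda>t. f t - c) has_vector_derivative f') (at t)"
    using assms by (auto intro!: derivative_eq_intros)
  then have "((\<lambda>t. (f t - c) \<bullet> b) has_vector_derivative f' \<bullet> b) (at t)"
    by (rule bounded_linear.has_vector_derivative[OF bounded_linear_inner_left])
  then show ?thesis by (simp add: has_real_derivative_iff_has_vector_derivative)
qed

lemma chord_component_has_jet:
  assumes t0: "t0 \<in> regular_params Q" and m: "1 \<le> m"
    and low: "\<forall>k<m. \<beta> \<bullet> chord_coeff P Q t0 k = 0"
    and lead: "\<beta> \<bullet> chord_coeff P Q t0 m \<noteq> 0"
  shows "\<exists>c. c \<noteq> 0 \<and> has_jet t0 m c (\<lambda>t. (rcurve P Q t - rcurve P Q t0) \<bullet> \<beta>)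
           (\<lambda>t. curve_deriv P Q 1 t \<bullet> \<beta>) (\<lambda>t. curve_deriv P Q 2 t \<bullet> \<beta>)"
proof -
  define S where "S = regular_params Q"
  define L where "L = chord_poly P Q t0 \<beta>"
  define AB where "AB = (pcompose (poly_shift m L) [:-t0, 1:], denom_prod Q)"
  have lowL: "\<forall>k<m. coeff L k = 0" using low by (simp add: L_def coeff_chord_poly)
  have D: "poly (snd AB) t \<noteq> 0" if "t \<in> S" for t
    using denom_prod_nonzero that by (simp add: AB_def S_def)
  have x: "(rcurve P Q t - rcurve P Q t0) \<bullet> \<beta> = (t - t0)^m * ratfun AB t" if t: "t \<in> S" for t
  proof -
    have "poly (denom_prod Q) t * ((rcurve P Q t - rcurve P Q t0) \<bullet> \<beta>)
          = (t - t0)^m * poly (poly_shift m L) (t - t0)"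
      using poly_chord_poly[of t Q P t0 \<beta>] poly_monom_factor(1)[OF lowL, of "t - t0"] t
      by (simp add: L_def S_def)
    then show ?thesis using D[OF t]
      by (simp add: ratfun_def AB_def poly_pcompose field_simps)
  qed
  have lead_value: "ratfun AB t0 \<noteq> 0"
    using poly_monom_factor(2)[OF lowL] lead D[of t0] t0
    by (simp add: ratfun_def AB_def L_def S_def poly_pcompose coeff_chord_poly)
  have "has_jet t0 m (ratfun AB t0) (\<lambda>t. (rcurve P Q t - rcurve P Q t0) \<bullet> \<beta>)
          (\<lambda>t. curve_deriv P Q 1 t \<bullet> \<beta>) (\<lambda>t. curve_deriv P Q 2 t \<bullet> \<beta>)"
  proof (rule monomial_mult_has_jet[where S = S])
    fix t assume t: "t \<in> S"
    show "(ratfun AB has_real_derivative ratfun (ratfun_deriv AB) t) (at t)"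
      by (rule ratfun_has_derivative[OF D[OF t]])
    show "(ratfun (ratfun_deriv AB) has_real_derivative
            ratfun (ratfun_deriv (ratfun_deriv AB)) t) (at t)"
      using ratfun_has_derivative ratfun_deriv_denom_nonzero[OF D[OF t], of 1] by simp
    show "((\<lambda>t. (rcurve P Q t - rcurve P Q t0) \<bullet> \<beta>) has_real_derivative
            curve_deriv P Q 1 t \<bullet> \<beta>) (at t)"
      using inner_has_real_derivative[OF curve_deriv_has_derivative[of t Q P 0]] t
      by (simp add: S_def curve_deriv_0)
    show "((\<lambda>t. curve_deriv P Q 1 t \<bullet> \<beta>) has_real_derivative curve_deriv P Q 2 t \<bullet> \<beta>) (at t)"
      using inner_has_real_derivative[OF curve_deriv_has_derivative[of t Q P 1], of 0] t
      by (simp add: S_def numeral_2_eq_2)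
  qed (use x m t0 D ratfun_isCont ratfun_deriv_denom_nonzero[OF D, of t0 2] open_regular_params
       in \<open>auto simp: S_def numeral_2_eq_2\<close>)
  with lead_value show ?thesis by blast
qed


text \<open>The coordinate of v along a in the frame (a, b, c), by Cramer's rule.\<close>

definition dual_coord :: "real^3 \<Rightarrow> real^3 \<Rightarrow> real^3 \<Rightarrow> real^3 \<Rightarrow> real" where
  "dual_coord a b c v = v \<bullet> (b \<times> c) / (a \<bullet> (b \<times> c))"

lemma triple_product_cyclic:
  fixes a b c :: "real^3"
  shows "b \<bullet> (c \<times> a) = a \<bullet> (b \<times> c)" and "c \<bullet> (a \<times> b) = a \<bullet> (b \<times> c)"
  by (simp_all add: cross3_simps)

lemma dual_coord_inner:
  fixes a b c v :: "real^3"
  assumes "a \<bullet> (b \<times> c) \<noteq> 0"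
  shows "v \<bullet> (b \<times> c) = dual_coord a b c v * (a \<bullet> (b \<times> c))"
    and "v \<bullet> (c \<times> a) = dual_coord b c a v * (a \<bullet> (b \<times> c))"
    and "v \<bullet> (a \<times> b) = dual_coord c a b v * (a \<bullet> (b \<times> c))"
  using assms triple_product_cyclic[where a = a and b = b and c = c] by (simp_all add: dual_coord_def)

lemma dual_coord_decomposition:
  fixes a b c v :: "real^3"
  assumes "a \<bullet> (b \<times> c) \<noteq> 0"
  shows "v = dual_coord a b c v *\<^sub>R a + dual_coord b c a v *\<^sub>R b + dual_coord c a b v *\<^sub>R c"
proof -
  have "(v \<bullet> (b \<times> c)) *\<^sub>R a + (v \<bullet> (c \<times> a)) *\<^sub>R b + (v \<bullet> (a \<times> b)) *\<^sub>R c = (a \<bullet> (b \<times> c)) *\<^sub>R v"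
    by (simp add: cross3_simps forall_3)
  then have "(a \<bullet> (b \<times> c)) *\<^sub>R v = (a \<bullet> (b \<times> c)) *\<^sub>R
      (dual_coord a b c v *\<^sub>R a + dual_coord b c a v *\<^sub>R b + dual_coord c a b v *\<^sub>R c)"
    using assms triple_product_cyclic[where a = a and b = b and c = c]
    by (simp add: dual_coord_def scaleR_add_right)
  then show ?thesis using assms by simp
qed

lemma cross_in_frame:
  fixes a b c u w :: "real^3"
  assumes "a \<bullet> (b \<times> c) \<noteq> 0"
  shows "u \<times> w =
      (dual_coord b c a u * dual_coord c a b w - dual_coord c a b u * dual_coord b c a w) *\<^sub>R (b \<times> c)
    + (dual_coord c a b u * dual_coord a b c w - dual_coord a b c u * dual_coord c a b w) *\<^sub>R (c \<times> a)
    + (dual_coord a b c u * dual_coord b c a w - dual_coord b c a u * dual_coord a b c w) *\<^sub>R (a \<times> b)"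
proof -
  define x y z where "x = dual_coord a b c" and "y = dual_coord b c a" and "z = dual_coord c a b"
  have "u \<times> w = (x u *\<^sub>R a + y u *\<^sub>R b + z u *\<^sub>R c) \<times> (x w *\<^sub>R a + y w *\<^sub>R b + z w *\<^sub>R c)"
    unfolding x_def y_def z_def
    by (rule arg_cong2[OF dual_coord_decomposition[OF assms] dual_coord_decomposition[OF assms]])
  also have "\<dots> = (y u * z w - z u * y w) *\<^sub>R (b \<times> c) + (z u * x w - x u * z w) *\<^sub>R (c \<times> a)
      + (x u * y w - y u * x w) *\<^sub>R (a \<times> b)"
    by (simp add: cross3_simps)
  finally show ?thesis unfolding x_def y_def z_def .
qed


lemma triple_in_frame:
  fixes a b c u v w :: "real^3"
  assumes "a \<bullet> (b \<times> c) \<noteq> 0"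
  shows "v \<bullet> (u \<times> w) =
      (dual_coord a b c v * (dual_coord b c a u * dual_coord c a b w - dual_coord c a b u * dual_coord b c a w)
     + dual_coord b c a v * (dual_coord c a b u * dual_coord a b c w - dual_coord a b c u * dual_coord c a b w)
     + dual_coord c a b v * (dual_coord a b c u * dual_coord b c a w - dual_coord b c a u * dual_coord a b c w))
     * (a \<bullet> (b \<times> c))"
  unfolding cross_in_frame[OF assms, of u w]
  by (simp only: inner_add_right inner_scaleR_right dual_coord_inner[OF assms, of v])
     (simp add: algebra_simps)

lemma inner_sgn_ratio:
  fixes a b w :: "'a::real_inner"
  shows "(a \<bullet> sgn w) / (b \<bullet> sgn w) = (a \<bullet> w) / (b \<bullet> w)"
  by (cases "w = 0") (simp_all add: sgn_div_norm)


section \<open>Asymptotics of the Frenet frame in an adapted frame\<close>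

locale adapted_frame =
  fixes r r' r'' :: "real \<Rightarrow> real^3" and t0 :: real and b1 b2 b3 :: "real^3"
    and p q s :: nat and X0 Y0 Z0 :: real
  assumes frame: "b1 \<bullet> (b2 \<times> b3) \<noteq> 0"
    and orders: "1 \<le> p" "p < q" "q < s"
    and leading: "X0 \<noteq> 0" "Y0 \<noteq> 0" "Z0 \<noteq> 0"
    and jet_x: "has_jet t0 p X0 (\<lambda>t. dual_coord b1 b2 b3 (r t - r t0))
                  (\<lambda>t. dual_coord b1 b2 b3 (r' t)) (\<lambda>t. dual_coord b1 b2 b3 (r'' t))"
    and jet_y: "has_jet t0 q Y0 (\<lambda>t. dual_coord b2 b3 b1 (r t - r t0))
                  (\<lambda>t. dual_coord b2 b3 b1 (r' t)) (\<lambda>t. dual_coord b2 b3 b1 (r'' t))"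
    and jet_z: "has_jet t0 s Z0 (\<lambda>t. dual_coord b3 b1 b2 (r t - r t0))
                  (\<lambda>t. dual_coord b3 b1 b2 (r' t)) (\<lambda>t. dual_coord b3 b1 b2 (r'' t))"
begin

abbreviation cx :: "real^3 \<Rightarrow> real" where "cx \<equiv> dual_coord b1 b2 b3"
abbreviation cy :: "real^3 \<Rightarrow> real" where "cy \<equiv> dual_coord b2 b3 b1"
abbreviation cz :: "real^3 \<Rightarrow> real" where "cz \<equiv> dual_coord b3 b1 b2"

definition tangent0 :: "real^3" where "tangent0 = sgn (X0 *\<^sub>R b1)"
definition binormal0 :: "real^3" where "binormal0 = sgn ((X0 * Y0) *\<^sub>R (b1 \<times> b2))"

lemma lim_x:
  "(rescale t0 0 p (\<lambda>t. cx (r t - r t0)) \<longlongrightarrow> X0) (at_right t0)"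
  "(rescale t0 1 p (\<lambda>t. cx (r' t)) \<longlongrightarrow> real p * X0) (at_right t0)"
  "(rescale t0 2 p (\<lambda>t. cx (r'' t)) \<longlongrightarrow> real p * (real p - 1) * X0) (at_right t0)"
  using jet_x by (simp_all add: has_jet_def)

lemma lim_y:
  "(rescale t0 0 q (\<lambda>t. cy (r t - r t0)) \<longlongrightarrow> Y0) (at_right t0)"
  "(rescale t0 1 q (\<lambda>t. cy (r' t)) \<longlongrightarrow> real q * Y0) (at_right t0)"
  "(rescale t0 2 q (\<lambda>t. cy (r'' t)) \<longlongrightarrow> real q * (real q - 1) * Y0) (at_right t0)"
  using jet_y by (simp_all add: has_jet_def)

lemma lim_z:
  "(rescale t0 0 s (\<lambda>t. cz (r t - r t0)) \<longlongrightarrow> Z0) (at_right t0)"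
  "(rescale t0 1 s (\<lambda>t. cz (r' t)) \<longlongrightarrow> real s * Z0) (at_right t0)"
  "(rescale t0 2 s (\<lambda>t. cz (r'' t)) \<longlongrightarrow> real s * (real s - 1) * Z0) (at_right t0)"
  using jet_z by (simp_all add: has_jet_def)

lemma decomposition: "v = cx v *\<^sub>R b1 + cy v *\<^sub>R b2 + cz v *\<^sub>R b3"
  by (rule dual_coord_decomposition[OF frame])

lemma scaled_velocity_limit:
  "((\<lambda>t. ((t - t0) / (t - t0)^p) *\<^sub>R r' t) \<longlongrightarrow> (real p * X0) *\<^sub>R b1) (at_right t0)"
proof -
  have "eventually (\<lambda>t. rescale t0 1 p (\<lambda>t. cx (r' t)) t *\<^sub>R b1
        + (rescale t0 1 q (\<lambda>t. cy (r' t)) t * (t - t0)^(q - p)) *\<^sub>R b2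
        + (rescale t0 1 s (\<lambda>t. cz (r' t)) t * (t - t0)^(s - p)) *\<^sub>R b3
        = ((t - t0) / (t - t0)^p) *\<^sub>R r' t) (at_right t0)"
    using eventually_at_right_less[of t0]
  proof eventually_elim
    case (elim t)
    then have t: "t \<noteq> t0" by simp
    have "((t - t0) / (t - t0)^p) *\<^sub>R r' t = ((t - t0) / (t - t0)^p) *\<^sub>R
            (cx (r' t) *\<^sub>R b1 + cy (r' t) *\<^sub>R b2 + cz (r' t) *\<^sub>R b3)"
      using decomposition[of "r' t"] by simp
    moreover have "rescale t0 1 q (\<lambda>t. cy (r' t)) t * (t - t0)^(q - p) = rescale t0 1 p (\<lambda>t. cy (r' t)) t"
      "rescale t0 1 s (\<lambda>t. cz (r' t)) t * (t - t0)^(s - p) = rescale t0 1 p (\<lambda>t. cz (r' t)) t"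
      using rescale_lower_order[OF t, of p q] rescale_lower_order[OF t, of p s] orders by simp_all
    ultimately show ?case by (simp add: rescale_def scaleR_add_right)
  qed
  moreover have "((\<lambda>t. rescale t0 1 p (\<lambda>t. cx (r' t)) t *\<^sub>R b1
        + (rescale t0 1 q (\<lambda>t. cy (r' t)) t * (t - t0)^(q - p)) *\<^sub>R b2
        + (rescale t0 1 s (\<lambda>t. cz (r' t)) t * (t - t0)^(s - p)) *\<^sub>R b3)
      \<longlongrightarrow> (real p * X0) *\<^sub>R b1 + (real q * Y0 * 0) *\<^sub>R b2 + (real s * Z0 * 0) *\<^sub>R b3) (at_right t0)"
    using orders by (intro tendsto_intros lim_x lim_y lim_z tendsto_power_at_right_zero) auto
  ultimately show ?thesis by (simp add: Lim_transform_eventually)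
qed

lemma tangent_limit: "((\<lambda>t. sgn (r' t)) \<longlongrightarrow> tangent0) (at_right t0)"
proof -
  have "eventually (\<lambda>t. sgn (((t - t0) / (t - t0)^p) *\<^sub>R r' t) = sgn (r' t)) (at_right t0)"
    using eventually_at_right_less[of t0] by eventually_elim (simp add: sgn_scaleR)
  moreover have "sgn ((real p * X0) *\<^sub>R b1) = tangent0"
    using orders by (simp add: tangent0_def sgn_scaleR sgn_mult)
  moreover have "b1 \<noteq> 0" using frame by auto
  ultimately show ?thesis
    using tendsto_sgn[OF scaled_velocity_limit] orders leading by (auto simp: Lim_transform_eventually)
qed

text \<open>The 2x2 minors of the coordinates of (r', r''), rescaled to order zero; r' x r''
  has these (times powers of h) as coordinates in the frame (b2 x b3, b3 x b1, b1 x b2).\<close>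

definition minor_yz :: "real \<Rightarrow> real" where
  "minor_yz t = rescale t0 1 q (\<lambda>t. cy (r' t)) t * rescale t0 2 s (\<lambda>t. cz (r'' t)) t
              - rescale t0 1 s (\<lambda>t. cz (r' t)) t * rescale t0 2 q (\<lambda>t. cy (r'' t)) t"

definition minor_zx :: "real \<Rightarrow> real" where
  "minor_zx t = rescale t0 1 s (\<lambda>t. cz (r' t)) t * rescale t0 2 p (\<lambda>t. cx (r'' t)) t
              - rescale t0 1 p (\<lambda>t. cx (r' t)) t * rescale t0 2 s (\<lambda>t. cz (r'' t)) t"

definition minor_xy :: "real \<Rightarrow> real" where
  "minor_xy t = rescale t0 1 p (\<lambda>t. cx (r' t)) t * rescale t0 2 q (\<lambda>t. cy (r'' t)) t
              - rescale t0 1 q (\<lambda>t. cy (r' t)) t * rescale t0 2 p (\<lambda>t. cx (r'' t)) t"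

lemma minors_eq:
  assumes t: "t \<noteq> t0"
  shows "cy (r' t) * cz (r'' t) - cz (r' t) * cy (r'' t) = minor_yz t * (t - t0)^(q + s) / (t - t0)^3"
    and "cz (r' t) * cx (r'' t) - cx (r' t) * cz (r'' t) = minor_zx t * (t - t0)^(s + p) / (t - t0)^3"
    and "cx (r' t) * cy (r'' t) - cy (r' t) * cx (r'' t) = minor_xy t * (t - t0)^(p + q) / (t - t0)^3"
proof -
  have identity: "a * b - c * d
      = (h * a / h^m * (h^2 * b / h^n) - h * c / h^n * (h^2 * d / h^m)) * h^(m + n) / h^3"
    if "h \<noteq> 0" for h a b c d :: real and m n
    using that by (simp add: field_simps power_add power2_eq_square power3_eq_cube)
  show "cy (r' t) * cz (r'' t) - cz (r' t) * cy (r'' t) = minor_yz t * (t - t0)^(q + s) / (t - t0)^3"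
    "cz (r' t) * cx (r'' t) - cx (r' t) * cz (r'' t) = minor_zx t * (t - t0)^(s + p) / (t - t0)^3"
    "cx (r' t) * cy (r'' t) - cy (r' t) * cx (r'' t) = minor_xy t * (t - t0)^(p + q) / (t - t0)^3"
    unfolding minor_yz_def minor_zx_def minor_xy_def rescale_def
    using identity t by simp_all
qed

lemma minor_yz_limit: "(minor_yz \<longlongrightarrow> real q * real s * (real s - real q) * Y0 * Z0) (at_right t0)"
proof -
  have "(minor_yz \<longlongrightarrow> real q * Y0 * (real s * (real s - 1) * Z0) - real s * Z0 * (real q * (real q - 1) * Y0))
      (at_right t0)"
    unfolding minor_yz_def by (intro tendsto_intros lim_y lim_z)
  then show ?thesis by (rule tendsto_eq_rhs) (simp add: algebra_simps)
qed

lemma minor_zx_limit: "(minor_zx \<longlongrightarrow> real s * real p * (real p - real s) * Z0 * X0) (at_right t0)"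
proof -
  have "(minor_zx \<longlongrightarrow> real s * Z0 * (real p * (real p - 1) * X0) - real p * X0 * (real s * (real s - 1) * Z0))
      (at_right t0)"
    unfolding minor_zx_def by (intro tendsto_intros lim_x lim_z)
  then show ?thesis by (rule tendsto_eq_rhs) (simp add: algebra_simps)
qed

lemma minor_xy_limit: "(minor_xy \<longlongrightarrow> real p * real q * (real q - real p) * X0 * Y0) (at_right t0)"
proof -
  have "(minor_xy \<longlongrightarrow> real p * X0 * (real q * (real q - 1) * Y0) - real q * Y0 * (real p * (real p - 1) * X0))
      (at_right t0)"
    unfolding minor_xy_def by (intro tendsto_intros lim_x lim_y)
  then show ?thesis by (rule tendsto_eq_rhs) (simp add: algebra_simps)
qed

lemma scaled_binormal_limit:
  "((\<lambda>t. ((t - t0)^3 / (t - t0)^(p + q)) *\<^sub>R (r' t \<times> r'' t))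
     \<longlongrightarrow> (real p * real q * (real q - real p) * X0 * Y0) *\<^sub>R (b1 \<times> b2)) (at_right t0)"
proof -
  have "eventually (\<lambda>t. (minor_yz t * (t - t0)^(s - p)) *\<^sub>R (b2 \<times> b3)
        + (minor_zx t * (t - t0)^(s - q)) *\<^sub>R (b3 \<times> b1) + minor_xy t *\<^sub>R (b1 \<times> b2)
        = ((t - t0)^3 / (t - t0)^(p + q)) *\<^sub>R (r' t \<times> r'' t)) (at_right t0)"
    using eventually_at_right_less[of t0]
  proof eventually_elim
    case (elim t)
    then have t: "t \<noteq> t0" by simp
    have H: "(t - t0)^(p + q) \<noteq> 0" using t by simp
    have powers: "(t - t0)^(q + s) = (t - t0)^(p + q) * (t - t0)^(s - p)"
      "(t - t0)^(s + p) = (t - t0)^(p + q) * (t - t0)^(s - q)"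
      using orders by (simp_all add: add.commute flip: power_add)
    have cancel: "(t - t0)^3 / H * (M * (H * E) / (t - t0)^3) = M * E"
      "(t - t0)^3 / H * (M * H / (t - t0)^3) = M" if "H \<noteq> 0" for M H E :: real
      using t that by simp_all
    show ?case
      unfolding cross_in_frame[OF frame, of "r' t" "r'' t"] minors_eq[OF t] powers
      using t by (simp add: scaleR_add_right cancel[OF H])
  qed
  moreover have "((\<lambda>t. (minor_yz t * (t - t0)^(s - p)) *\<^sub>R (b2 \<times> b3)
        + (minor_zx t * (t - t0)^(s - q)) *\<^sub>R (b3 \<times> b1) + minor_xy t *\<^sub>R (b1 \<times> b2))
      \<longlongrightarrow> (real q * real s * (real s - real q) * Y0 * Z0 * 0) *\<^sub>R (b2 \<times> b3)
        + (real s * real p * (real p - real s) * Z0 * X0 * 0) *\<^sub>R (b3 \<times> b1)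
        + (real p * real q * (real q - real p) * X0 * Y0) *\<^sub>R (b1 \<times> b2)) (at_right t0)"
    using orders
    by (intro tendsto_intros minor_yz_limit minor_zx_limit minor_xy_limit tendsto_power_at_right_zero)
       auto
  ultimately show ?thesis by (simp add: Lim_transform_eventually)
qed

lemma binormal_limit: "((\<lambda>t. sgn (r' t \<times> r'' t)) \<longlongrightarrow> binormal0) (at_right t0)"
proof -
  define K where "K = real p * real q * (real q - real p)"
  have K: "K > 0" using orders by (simp add: K_def)
  have "eventually (\<lambda>t. sgn (((t - t0)^3 / (t - t0)^(p + q)) *\<^sub>R (r' t \<times> r'' t)) = sgn (r' t \<times> r'' t))
      (at_right t0)"
    using eventually_at_right_less[of t0] by eventually_elim (simp add: sgn_scaleR)
  moreover have "sgn ((K * X0 * Y0) *\<^sub>R (b1 \<times> b2)) = binormal0"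
    using K by (simp add: binormal0_def sgn_scaleR sgn_mult mult.assoc)
  moreover have "b3 \<bullet> (b1 \<times> b2) \<noteq> 0" using frame triple_product_cyclic(2)[where a = b1 and b = b2 and c = b3] by simp
  then have "b1 \<times> b2 \<noteq> 0" by auto
  ultimately show ?thesis
    using tendsto_sgn[OF scaled_binormal_limit[folded K_def]] K leading
    by (auto simp: Lim_transform_eventually)
qed

lemma tangent0_eq: "tangent0 = (sgn X0 / norm b1) *\<^sub>R b1"
  by (simp add: tangent0_def sgn_scaleR sgn_div_norm divide_inverse)

lemma binormal0_eq: "binormal0 = (sgn (X0 * Y0) / norm (b1 \<times> b2)) *\<^sub>R (b1 \<times> b2)"
  by (simp add: binormal0_def sgn_scaleR sgn_div_norm divide_inverse)

lemma tangent0_binormal0_orthogonal: "tangent0 \<bullet> binormal0 = 0"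
  by (simp add: tangent0_eq binormal0_eq dot_cross_self)

text \<open>The ratio that locates the vertex r1(t) is h^p times a factor that stays bounded.\<close>

definition osculating_factor :: "real \<Rightarrow> real" where
  "osculating_factor t =
     (rescale t0 0 p (\<lambda>t. cx (r t - r t0)) t * minor_yz t
      + rescale t0 0 q (\<lambda>t. cy (r t - r t0)) t * minor_zx t
      + rescale t0 0 s (\<lambda>t. cz (r t - r t0)) t * minor_xy t) / (sgn X0 / norm b1 * minor_yz t)"

lemma osculating_ratio_eq:
  assumes t: "t \<noteq> t0"
  shows "((r t - r t0) \<bullet> sgn (r' t \<times> r'' t)) / (tangent0 \<bullet> sgn (r' t \<times> r'' t))
    = (t - t0)^p * osculating_factor t"
proof -
  define \<kappa> where "\<kappa> = sgn X0 / norm b1"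
  have \<kappa>: "\<kappa> \<noteq> 0" using leading frame by (auto simp: \<kappa>_def sgn_zero_iff)
  define \<Delta> where "\<Delta> = b1 \<bullet> (b2 \<times> b3)"
  have \<Delta>: "\<Delta> \<noteq> 0" using frame by (simp add: \<Delta>_def)
  define h where "h = t - t0"
  have h: "h \<noteq> 0" using t by (simp add: h_def)
  have chord: "cx (r t - r t0) = rescale t0 0 p (\<lambda>t. cx (r t - r t0)) t * h^p"
    "cy (r t - r t0) = rescale t0 0 q (\<lambda>t. cy (r t - r t0)) t * h^q"
    "cz (r t - r t0) = rescale t0 0 s (\<lambda>t. cz (r t - r t0)) t * h^s"
    using t by (simp_all add: h_def rescale_def)
  have algebra: "((X * h^p) * (M1 * h^(q + s) / h^3) + (Y * h^q) * (M2 * h^(s + p) / h^3)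
        + (Z * h^s) * (M3 * h^(p + q) / h^3)) * \<Delta> / (\<kappa> * (M1 * h^(q + s) / h^3 * \<Delta>))
      = h^p * ((X * M1 + Y * M2 + Z * M3) / (\<kappa> * M1))" for X Y Z M1 M2 M3 :: real
    by (cases "M1 = 0") (use h \<Delta> \<kappa> in \<open>simp_all add: field_simps power_add\<close>)
  have tangent: "tangent0 \<bullet> (r' t \<times> r'' t)
      = \<kappa> * ((cy (r' t) * cz (r'' t) - cz (r' t) * cy (r'' t)) * \<Delta>)"
    unfolding cross_in_frame[OF frame, of "r' t" "r'' t"] tangent0_eq \<kappa>_def \<Delta>_def
    by (simp add: inner_add_right dot_cross_self)
  show ?thesis
    unfolding inner_sgn_ratio triple_in_frame[OF frame, of "r t - r t0"] \<Delta>_def[symmetric] tangent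
      minors_eq[OF t] chord h_def[symmetric] osculating_factor_def \<kappa>_def[symmetric]
    by (rule algebra)
qed

lemma osculating_ratio_limit:
  "((\<lambda>t. ((r t - r t0) \<bullet> sgn (r' t \<times> r'' t)) / (tangent0 \<bullet> sgn (r' t \<times> r'' t))) \<longlongrightarrow> 0)
     (at_right t0)"
proof -
  have "sgn X0 / norm b1 \<noteq> 0" using leading frame by (auto simp: sgn_zero_iff)
  then have "((\<lambda>t. (t - t0)^p * osculating_factor t) \<longlongrightarrow> 0 *
      ((X0 * (real q * real s * (real s - real q) * Y0 * Z0)
        + Y0 * (real s * real p * (real p - real s) * Z0 * X0)
        + Z0 * (real p * real q * (real q - real p) * X0 * Y0))
       / (sgn X0 / norm b1 * (real q * real s * (real s - real q) * Y0 * Z0)))) (at_right t0)"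
    unfolding osculating_factor_def using orders leading
    by (intro tendsto_intros tendsto_power_at_right_zero lim_x(1) lim_y(1) lim_z(1)
        minor_yz_limit minor_zx_limit minor_xy_limit) auto
  moreover have "eventually (\<lambda>t. (t - t0)^p * osculating_factor t
      = ((r t - r t0) \<bullet> sgn (r' t \<times> r'' t)) / (tangent0 \<bullet> sgn (r' t \<times> r'' t))) (at_right t0)"
    using eventually_at_right_less[of t0] by eventually_elim (simp add: osculating_ratio_eq)
  ultimately show ?thesis by (simp add: Lim_transform_eventually)
qed

text \<open>The ratio that locates the vertex r2(t) is h^p times a factor that stays bounded.\<close>

lemma tangent_ratio_eq:
  assumes t: "t0 < t"
  shows "((r t - r t0) \<bullet> binormal0) / (sgn (r' t) \<bullet> binormal0)
    = rescale t0 0 s (\<lambda>t. cz (r t - r t0)) t / rescale t0 1 s (\<lambda>t. cz (r' t)) t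
      * ((t - t0)^p * norm (((t - t0) / (t - t0)^p) *\<^sub>R r' t))"
proof -
  define \<Delta> where "\<Delta> = b1 \<bullet> (b2 \<times> b3)"
  have \<Delta>: "\<Delta> \<noteq> 0" using frame by (simp add: \<Delta>_def)
  define \<kappa> where "\<kappa> = sgn (X0 * Y0) / norm (b1 \<times> b2)"
  have \<kappa>: "\<kappa> \<noteq> 0"
    using leading frame triple_product_cyclic(2)[where a = b1 and b = b2 and c = b3]
    by (auto simp: \<kappa>_def sgn_zero_iff)
  have coord: "v \<bullet> binormal0 = \<kappa> * (cz v * \<Delta>)" for v
    unfolding binormal0_eq \<kappa>_def[symmetric] \<Delta>_def by (simp add: dual_coord_inner(3)[OF frame])
  define h where "h = t - t0"
  have h: "h > 0" using t by (simp add: h_def)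
  have "((r t - r t0) \<bullet> binormal0) / (sgn (r' t) \<bullet> binormal0)
      = cz (r t - r t0) * norm (r' t) / cz (r' t)"
    using \<kappa> \<Delta> by (cases "r' t = 0") (simp_all add: coord sgn_div_norm dual_coord_def field_simps)
  moreover have "cz (r t - r t0) = rescale t0 0 s (\<lambda>t. cz (r t - r t0)) t * h^s"
    "cz (r' t) = rescale t0 1 s (\<lambda>t. cz (r' t)) t * h^s / h"
    using h by (simp_all add: h_def rescale_def)
  ultimately show ?thesis
    using h by (cases "rescale t0 1 s (\<lambda>t. cz (r' t)) t = 0")
      (simp_all add: h_def[symmetric] field_simps)
qed

lemma tangent_ratio_limit:
  "((\<lambda>t. ((r t - r t0) \<bullet> binormal0) / (sgn (r' t) \<bullet> binormal0)) \<longlongrightarrow> 0) (at_right t0)"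
proof -
  have "((\<lambda>t. rescale t0 0 s (\<lambda>t. cz (r t - r t0)) t / rescale t0 1 s (\<lambda>t. cz (r' t)) t
      * ((t - t0)^p * norm (((t - t0) / (t - t0)^p) *\<^sub>R r' t)))
      \<longlongrightarrow> Z0 / (real s * Z0) * (0 * norm ((real p * X0) *\<^sub>R b1))) (at_right t0)"
    using orders leading
    by (intro tendsto_intros lim_z tendsto_power_at_right_zero scaled_velocity_limit) auto
  moreover have "eventually (\<lambda>t. rescale t0 0 s (\<lambda>t. cz (r t - r t0)) t
      / rescale t0 1 s (\<lambda>t. cz (r' t)) t * ((t - t0)^p * norm (((t - t0) / (t - t0)^p) *\<^sub>R r' t))
      = ((r t - r t0) \<bullet> binormal0) / (sgn (r' t) \<bullet> binormal0)) (at_right t0)"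
    using eventually_at_right_less[of t0] by eventually_elim (simp add: tangent_ratio_eq)
  ultimately show ?thesis by (simp add: Lim_transform_eventually)
qed

end


section \<open>Construction of the adapted frame\<close>

text \<open>From a sequence of vectors that is not contained in any plane and starts with 0,
  pick the first nonzero vector c p, the first vector c q independent of it, and the first
  vector c s independent of both; each lower-index vector lies in the span of the earlier
  choices.\<close>

lemma adapted_exponents:
  fixes c :: "nat \<Rightarrow> real^3"
  assumes nonplanar: "\<And>n. n \<noteq> 0 \<Longrightarrow> \<exists>k. n \<bullet> c k \<noteq> 0" and c0: "c 0 = 0"
  obtains p q s where "1 \<le> p" "p < q" "q < s" "c p \<bullet> (c q \<times> c s) \<noteq> 0"
    "\<forall>k<p. (c q \<times> c s) \<bullet> c k = 0" "\<forall>k<q. (c s \<times> c p) \<bullet> c k = 0"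
    "\<forall>k<s. (c p \<times> c q) \<bullet> c k = 0"
proof -
  have triple: "(a \<times> b) \<bullet> d = b \<bullet> (d \<times> a)" for a b d :: "real^3"
    by (simp add: cross3_simps)
  have "\<exists>k. c k \<noteq> 0"
    using nonplanar[of "axis 1 1"] by (metis axis_eq_0_iff inner_zero_right zero_neq_one)
  define p where "p = (LEAST k. c k \<noteq> 0)"
  have b1: "c p \<noteq> 0" unfolding p_def by (rule LeastI_ex) fact
  have below_p: "c k = 0" if "k < p" for k using that not_less_Least unfolding p_def by blast
  have p: "1 \<le> p" using b1 c0 by (cases p) auto
  obtain m where "c p \<times> m \<noteq> 0" using cross_basis_nonzero[OF b1] by blast
  then obtain k where "(c p \<times> m) \<bullet> c k \<noteq> 0" using nonplanar by blast
  then have "\<exists>k. c p \<times> c k \<noteq> 0"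
    unfolding triple by (metis cross_skew inner_zero_right neg_equal_0_iff_equal)
  define q where "q = (LEAST k. c p \<times> c k \<noteq> 0)"
  have b12: "c p \<times> c q \<noteq> 0" unfolding q_def by (rule LeastI_ex) fact
  have below_q: "c p \<times> c k = 0" if "k < q" for k using that not_less_Least unfolding q_def by blast
  have pq: "p < q" using b12 below_p by (metis cross_refl cross_zero_right linorder_neqE_nat)
  have "\<exists>k. (c p \<times> c q) \<bullet> c k \<noteq> 0" using nonplanar[OF b12] .
  define s where "s = (LEAST k. (c p \<times> c q) \<bullet> c k \<noteq> 0)"
  have b123: "(c p \<times> c q) \<bullet> c s \<noteq> 0" unfolding s_def by (rule LeastI_ex) fact
  have below_s: "(c p \<times> c q) \<bullet> c k = 0" if "k < s" for k
    using that not_less_Least unfolding s_def by blast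
  have below_q': "(c s \<times> c p) \<bullet> c k = 0" if "k < q" for k
  proof -
    have "(c s \<times> c p) \<bullet> c k = c s \<bullet> (c p \<times> c k)" by (simp add: cross3_simps)
    then show ?thesis using below_q[OF that] by simp
  qed
  have qs: "q < s"
  proof (rule ccontr)
    assume "\<not> q < s"
    moreover have "(c p \<times> c q) \<bullet> c s = - ((c p \<times> c s) \<bullet> c q)" by (simp add: cross3_simps)
    ultimately show False
      using b123 below_q[of s] by (cases "s = q") (auto simp: dot_cross_self)
  qed
  have frame: "c p \<bullet> (c q \<times> c s) \<noteq> 0"
    using b123 by (metis inner_commute triple_product_cyclic(2))
  show ?thesis
    using that p pq qs frame below_p below_q' below_s by simp
qed

lemma frame_coordinate_has_jet:
  assumes t0: "t0 \<in> regular_params Q" and m: "1 \<le> m"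
    and low: "\<forall>k<m. (b \<times> c) \<bullet> chord_coeff P Q t0 k = 0"
    and lead: "chord_coeff P Q t0 m \<bullet> (b \<times> c) \<noteq> 0"
  shows "\<exists>X0. X0 \<noteq> 0 \<and> has_jet t0 m X0
      (\<lambda>t. dual_coord (chord_coeff P Q t0 m) b c (rcurve P Q t - rcurve P Q t0))
      (\<lambda>t. dual_coord (chord_coeff P Q t0 m) b c (curve_deriv P Q 1 t))
      (\<lambda>t. dual_coord (chord_coeff P Q t0 m) b c (curve_deriv P Q 2 t))"
proof -
  obtain X where X: "X \<noteq> 0" and jet: "has_jet t0 m X (\<lambda>t. (rcurve P Q t - rcurve P Q t0) \<bullet> (b \<times> c))
      (\<lambda>t. curve_deriv P Q 1 t \<bullet> (b \<times> c)) (\<lambda>t. curve_deriv P Q 2 t \<bullet> (b \<times> c))"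
    using chord_component_has_jet[OF t0 m low] lead by (auto simp: inner_commute)
  show ?thesis
    using has_jet_divide[OF jet, of "chord_coeff P Q t0 m \<bullet> (b \<times> c)"] X lead
    unfolding dual_coord_def by (intro exI[of _ "X / (chord_coeff P Q t0 m \<bullet> (b \<times> c))"]) simp
qed

lemma adapted_frame_exists:
  assumes adm: "admissible_curve P Q I" and t0: "t0 \<in> I"
  obtains b1 b2 b3 p q s X0 Y0 Z0 where
    "adapted_frame (rcurve P Q) (curve_deriv P Q 1) (curve_deriv P Q 2) t0 b1 b2 b3 p q s X0 Y0 Z0"
proof -
  have reg: "t0 \<in> regular_params Q"
    using adm t0 by (auto simp: admissible_curve_def regular_params_def)
  obtain p q s where orders: "1 \<le> p" "p < q" "q < s"
    and frame: "chord_coeff P Q t0 p \<bullet> (chord_coeff P Q t0 q \<times> chord_coeff P Q t0 s) \<noteq> 0"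
    and low: "\<forall>k<p. (chord_coeff P Q t0 q \<times> chord_coeff P Q t0 s) \<bullet> chord_coeff P Q t0 k = 0"
      "\<forall>k<q. (chord_coeff P Q t0 s \<times> chord_coeff P Q t0 p) \<bullet> chord_coeff P Q t0 k = 0"
      "\<forall>k<s. (chord_coeff P Q t0 p \<times> chord_coeff P Q t0 q) \<bullet> chord_coeff P Q t0 k = 0"
    using adapted_exponents[where c = "chord_coeff P Q t0",
        OF chord_coeff_nonplanar[OF adm] chord_coeff_0[OF reg]] by blast
  define b1 b2 b3 where "b1 = chord_coeff P Q t0 p" and "b2 = chord_coeff P Q t0 q"
    and "b3 = chord_coeff P Q t0 s"
  have cyclic: "b2 \<bullet> (b3 \<times> b1) \<noteq> 0" "b3 \<bullet> (b1 \<times> b2) \<noteq> 0"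
    using frame triple_product_cyclic[where a = b1 and b = b2 and c = b3]
    by (simp_all add: b1_def b2_def b3_def)
  have "1 \<le> q" "1 \<le> s" using orders by simp_all
  obtain X0 where "X0 \<noteq> 0"
    "has_jet t0 p X0 (\<lambda>t. dual_coord b1 b2 b3 (rcurve P Q t - rcurve P Q t0))
      (\<lambda>t. dual_coord b1 b2 b3 (curve_deriv P Q 1 t)) (\<lambda>t. dual_coord b1 b2 b3 (curve_deriv P Q 2 t))"
    using frame_coordinate_has_jet[OF reg orders(1) low(1), folded b1_def b2_def b3_def] frame
    by (auto simp: b1_def b2_def b3_def)
  moreover obtain Y0 where "Y0 \<noteq> 0"
    "has_jet t0 q Y0 (\<lambda>t. dual_coord b2 b3 b1 (rcurve P Q t - rcurve P Q t0))
      (\<lambda>t. dual_coord b2 b3 b1 (curve_deriv P Q 1 t)) (\<lambda>t. dual_coord b2 b3 b1 (curve_deriv P Q 2 t))"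
    using frame_coordinate_has_jet[OF reg \<open>1 \<le> q\<close> low(2), folded b1_def b2_def b3_def] cyclic
    by auto
  moreover obtain Z0 where "Z0 \<noteq> 0"
    "has_jet t0 s Z0 (\<lambda>t. dual_coord b3 b1 b2 (rcurve P Q t - rcurve P Q t0))
      (\<lambda>t. dual_coord b3 b1 b2 (curve_deriv P Q 1 t)) (\<lambda>t. dual_coord b3 b1 b2 (curve_deriv P Q 2 t))"
    using frame_coordinate_has_jet[OF reg \<open>1 \<le> s\<close> low(3), folded b1_def b2_def b3_def] cyclic
    by auto
  ultimately have "adapted_frame (rcurve P Q) (curve_deriv P Q 1) (curve_deriv P Q 2) t0
      b1 b2 b3 p q s X0 Y0 Z0"
    using orders frame by (intro adapted_frame.intro) (simp_all add: b1_def b2_def b3_def)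
  then show ?thesis by (rule that)
qed


lemma utangent_rcurve:
  "t \<in> regular_params Q \<Longrightarrow> utangent (rcurve P Q) t = sgn (curve_deriv P Q 1 t)"
  by (simp add: utangent_def sgn_div_norm d1_rcurve)

lemma ubinormal_rcurve:
  "t \<in> regular_params Q \<Longrightarrow>
     ubinormal (rcurve P Q) t = sgn (curve_deriv P Q 1 t \<times> curve_deriv P Q 2 t)"
  by (simp add: ubinormal_def sgn_div_norm d1_rcurve d2_rcurve)

lemma Lim_transform_eventually_eq:
  fixes f g :: "real \<Rightarrow> 'a::t2_space"
  assumes "F \<noteq> bot" "(g \<longlongrightarrow> l) F" "eventually (\<lambda>t. g t = f t) F"
  shows "Lim F f = l"
  using assms by (intro tendsto_Lim) (auto intro: Lim_transform_eventually)

lemma right_frenet_limits: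
  assumes adm: "admissible_curve P Q I" and t0: "t0 \<in> I"
  defines "r \<equiv> rcurve P Q"
  shows "alpha_plus r t0 \<bullet> gamma_plus r t0 = 0"
    and "((\<lambda>t. ((r t - r t0) \<bullet> ubinormal r t) / (alpha_plus r t0 \<bullet> ubinormal r t)) \<longlongrightarrow> 0)
           (at_right t0)"
    and "((\<lambda>t. ((r t - r t0) \<bullet> gamma_plus r t0) / (utangent r t \<bullet> gamma_plus r t0)) \<longlongrightarrow> 0)
           (at_right t0)"
proof -
  obtain b1 b2 b3 p q s X0 Y0 Z0 where "adapted_frame r (curve_deriv P Q 1) (curve_deriv P Q 2)
      t0 b1 b2 b3 p q s X0 Y0 Z0"
    using adapted_frame_exists[OF adm t0] unfolding r_def by blast
  then interpret frame: adapted_frame r "curve_deriv P Q 1" "curve_deriv P Q 2"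
      t0 b1 b2 b3 p q s X0 Y0 Z0 .
  have "t0 \<in> regular_params Q" using adm t0 by (auto simp: admissible_curve_def regular_params_def)
  then have regular: "eventually (\<lambda>t. t \<in> regular_params Q) (at_right t0)"
    using eventually_at_in_open'[OF open_regular_params] by (auto intro: filter_leD[OF at_le])
  have tangent: "eventually (\<lambda>t. sgn (curve_deriv P Q 1 t) = utangent r t) (at_right t0)"
    and binormal: "eventually (\<lambda>t. sgn (curve_deriv P Q 1 t \<times> curve_deriv P Q 2 t) = ubinormal r t)
      (at_right t0)"
    using regular by (auto simp: r_def utangent_rcurve ubinormal_rcurve elim: eventually_mono)
  have alpha: "alpha_plus r t0 = frame.tangent0"
    unfolding alpha_plus_def using frame.tangent_limit tangent
    by (intro Lim_transform_eventually_eq) auto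
  have gamma: "gamma_plus r t0 = frame.binormal0"
    unfolding gamma_plus_def using frame.binormal_limit binormal
    by (intro Lim_transform_eventually_eq) auto
  show "alpha_plus r t0 \<bullet> gamma_plus r t0 = 0"
    unfolding alpha gamma by (rule frame.tangent0_binormal0_orthogonal)
  show "((\<lambda>t. ((r t - r t0) \<bullet> ubinormal r t) / (alpha_plus r t0 \<bullet> ubinormal r t)) \<longlongrightarrow> 0)
      (at_right t0)"
  proof (rule Lim_transform_eventually[OF frame.osculating_ratio_limit])
    show "eventually (\<lambda>t. ((r t - r t0) \<bullet> sgn (curve_deriv P Q 1 t \<times> curve_deriv P Q 2 t))
          / (frame.tangent0 \<bullet> sgn (curve_deriv P Q 1 t \<times> curve_deriv P Q 2 t))
        = ((r t - r t0) \<bullet> ubinormal r t) / (alpha_plus r t0 \<bullet> ubinormal r t)) (at_right t0)"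
      using binormal unfolding alpha by eventually_elim simp
  qed
  show "((\<lambda>t. ((r t - r t0) \<bullet> gamma_plus r t0) / (utangent r t \<bullet> gamma_plus r t0)) \<longlongrightarrow> 0)
      (at_right t0)"
  proof (rule Lim_transform_eventually[OF frame.tangent_ratio_limit])
    show "eventually (\<lambda>t. ((r t - r t0) \<bullet> frame.binormal0) / (sgn (curve_deriv P Q 1 t) \<bullet> frame.binormal0)
        = ((r t - r t0) \<bullet> gamma_plus r t0) / (utangent r t \<bullet> gamma_plus r t0)) (at_right t0)"
      using tangent unfolding gamma by eventually_elim simp
  qed
qed

text \<open>At a regular parameter that is not an inflection, the Frenet frame is continuous, so
  the one-sided tangent and binormal from the left are the ordinary ones.\<close>

lemma left_frenet_at_regular:
  assumes t: "t \<in> regular_params Q" and no_inflection: "\<not> inflection_param (rcurve P Q) t"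
  defines "r \<equiv> rcurve P Q"
  shows "alpha_minus r t = utangent r t" and "gamma_minus r t = ubinormal r t"
    and "utangent r t \<bullet> ubinormal r t = 0" and "norm (utangent r t) = 1"
proof -
  define v w where "v = curve_deriv P Q 1" and "w = (\<lambda>t. curve_deriv P Q 1 t \<times> curve_deriv P Q 2 t)"
  have "w t \<noteq> 0" using no_inflection t by (auto simp: inflection_param_def d1_rcurve d2_rcurve w_def)
  then have "v t \<noteq> 0" by (auto simp: v_def w_def)
  have "isCont v t" "isCont w t"
    unfolding v_def w_def by (intro continuous_cross curve_deriv_isCont t)+
  then have "((\<lambda>s. sgn (v s)) \<longlongrightarrow> sgn (v t)) (at t)" "((\<lambda>s. sgn (w s)) \<longlongrightarrow> sgn (w t)) (at t)"
    using \<open>v t \<noteq> 0\<close> \<open>w t \<noteq> 0\<close> unfolding isCont_def by (auto intro: tendsto_sgn)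
  moreover have "eventually (\<lambda>s. sgn (v s) = utangent r s \<and> sgn (w s) = ubinormal r s) (at t)"
    using eventually_at_in_open'[OF open_regular_params t]
    by eventually_elim (simp add: r_def utangent_rcurve ubinormal_rcurve v_def w_def)
  ultimately have "(utangent r \<midarrow>t\<rightarrow> utangent r t)" "(ubinormal r \<midarrow>t\<rightarrow> ubinormal r t)"
    using t by (auto simp: r_def utangent_rcurve ubinormal_rcurve v_def w_def
        elim!: Lim_transform_eventually elim: eventually_mono)
  then show "alpha_minus r t = utangent r t" "gamma_minus r t = ubinormal r t"
    unfolding alpha_minus_def gamma_minus_def
    by (simp_all add: tendsto_Lim tendsto_within_subset trivial_limit_at_left_real)
  show "utangent r t \<bullet> ubinormal r t = 0" "norm (utangent r t) = 1"
    using t \<open>v t \<noteq> 0\<close>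
    by (simp_all add: r_def utangent_rcurve ubinormal_rcurve sgn_div_norm dot_cross_self v_def norm_sgn)
qed


section \<open>Vertices of the associated tetrahedron\<close>

text \<open>The tangent line at r(a) lies in the osculating plane at a, so its intersection with
  L = O+(a) \<inter> O-(b) is its intersection with O-(b), which is unique when the tangent
  is transversal to that plane; likewise for the tangent line at r(b).\<close>

lemma line_meets_planes:
  fixes a b \<alpha> \<gamma> \<gamma>' :: "real^3"
  assumes "\<alpha> \<bullet> \<gamma> = 0" "\<alpha> \<bullet> \<gamma>' \<noteq> 0"
  shows "(THE X. X \<in> {a + l *\<^sub>R \<alpha> |l. True} \<inter> ({X. (X - a) \<bullet> \<gamma> = 0} \<inter> {X. (X - b) \<bullet> \<gamma>' = 0}))
     = a + (((b - a) \<bullet> \<gamma>') / (\<alpha> \<bullet> \<gamma>')) *\<^sub>R \<alpha>"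
proof (rule the_equality)
  show "a + (((b - a) \<bullet> \<gamma>') / (\<alpha> \<bullet> \<gamma>')) *\<^sub>R \<alpha>
      \<in> {a + l *\<^sub>R \<alpha> |l. True} \<inter> ({X. (X - a) \<bullet> \<gamma> = 0} \<inter> {X. (X - b) \<bullet> \<gamma>' = 0})"
    using assms by (auto simp: inner_diff_left inner_add_left)
  fix X assume "X \<in> {a + l *\<^sub>R \<alpha> |l. True} \<inter> ({X. (X - a) \<bullet> \<gamma> = 0} \<inter> {X. (X - b) \<bullet> \<gamma>' = 0})"
  then obtain l where X: "X = a + l *\<^sub>R \<alpha>" and "(X - b) \<bullet> \<gamma>' = 0" by auto
  then have "(a - b) \<bullet> \<gamma>' + l * (\<alpha> \<bullet> \<gamma>') = 0"
    by (simp add: inner_diff_left inner_add_left)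
  then have "l = ((b - a) \<bullet> \<gamma>') / (\<alpha> \<bullet> \<gamma>')"
    using assms(2) by (simp add: field_simps inner_diff_left)
  then show "X = a + (((b - a) \<bullet> \<gamma>') / (\<alpha> \<bullet> \<gamma>')) *\<^sub>R \<alpha>" using X by simp
qed

lemma tet_v1_eq:
  assumes "alpha_plus r a \<bullet> gamma_plus r a = 0" and "alpha_plus r a \<bullet> gamma_minus r b \<noteq> 0"
  shows "tet_v1 r a b = r a + (((r b - r a) \<bullet> gamma_minus r b) / (alpha_plus r a \<bullet> gamma_minus r b))
           *\<^sub>R alpha_plus r a"
  unfolding tet_v1_def tangent_plus_def tet_L_def osc_plus_def osc_minus_def
  by (rule line_meets_planes[OF assms])

lemma tet_v2_eq:
  assumes "alpha_minus r b \<bullet> gamma_minus r b = 0" and "alpha_minus r b \<bullet> gamma_plus r a \<noteq> 0"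
  shows "tet_v2 r a b = r b + (((r a - r b) \<bullet> gamma_plus r a) / (alpha_minus r b \<bullet> gamma_plus r a))
           *\<^sub>R alpha_minus r b"
  unfolding tet_v2_def tangent_minus_def tet_L_def osc_plus_def osc_minus_def
  by (subst Int_commute[of "{X. (X - r a) \<bullet> gamma_plus r a = 0}"]) (rule line_meets_planes[OF assms])

lemma dist_tendsto_zero_through:
  fixes u v w :: "real \<Rightarrow> 'a::metric_space"
  assumes "((\<lambda>t. dist a (u t)) \<longlongrightarrow> 0) F" "((\<lambda>t. dist (v t) (w t)) \<longlongrightarrow> 0) F"
    and "((\<lambda>t. dist a (w t)) \<longlongrightarrow> 0) F"
  shows "((\<lambda>t. dist (u t) (v t)) \<longlongrightarrow> 0) F"
proof (rule tendsto_sandwich[where f = "\<lambda>_. 0"])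
  show "eventually (\<lambda>t. 0 \<le> dist (u t) (v t)) F" by simp
  show "eventually (\<lambda>t. dist (u t) (v t) \<le> dist a (u t) + dist a (w t) + dist (v t) (w t)) F"
  proof (intro always_eventually allI)
    fix t
    have "dist (u t) (v t) \<le> dist (u t) a + dist a (v t)" by (rule dist_triangle)
    moreover have "dist a (v t) \<le> dist a (w t) + dist (w t) (v t)" by (rule dist_triangle)
    ultimately show "dist (u t) (v t) \<le> dist a (u t) + dist a (w t) + dist (v t) (w t)"
      by (simp add: dist_commute)
  qed
  show "((\<lambda>t. dist a (u t) + dist a (w t) + dist (v t) (w t)) \<longlongrightarrow> 0) F"
    using tendsto_add[OF tendsto_add[OF assms(1) assms(3)] assms(2)] by simp
qed (rule tendsto_const)


lemma admissible_segment_regular: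
  assumes "admissible_curve P Q I" and "admissible_segment P Q I t0 t1"
  shows "{t0..t1} \<subseteq> regular_params Q"
  using assms by (auto simp: admissible_curve_def admissible_segment_def regular_params_def Let_def)

text \<open>For t in (t0, t1], the outer edges are expressed by the two ratios of
  right_frenet_limits; transversality (condition I) makes the vertices well defined.\<close>

lemma outer_edges_eq:
  assumes adm: "admissible_curve P Q I" and seg: "admissible_segment P Q I t0 t1"
  defines "r \<equiv> rcurve P Q"
  shows "eventually (\<lambda>t.
      dist (r t0) (tet_v1 r t0 t) = \<bar>((r t - r t0) \<bullet> ubinormal r t) / (alpha_plus r t0 \<bullet> ubinormal r t)\<bar>
        * norm (alpha_plus r t0) \<and>
      dist (tet_v2 r t0 t) (r t) = \<bar>((r t - r t0) \<bullet> gamma_plus r t0) / (utangent r t \<bullet> gamma_plus r t0)\<bar>)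
    (at_right t0)"
proof -
  have t01: "t0 < t1" and sub: "{t0..t1} \<subseteq> I"
    and nochar: "\<And>t. t \<in> {t0<..t1} \<Longrightarrow> \<not> character_param P Q t"
    and transversal: "\<And>s1 s2. t0 \<le> s1 \<Longrightarrow> s1 < s2 \<Longrightarrow> s2 \<le> t1 \<Longrightarrow>
         alpha_plus r s1 \<bullet> gamma_minus r s2 \<noteq> 0 \<and> alpha_minus r s2 \<bullet> gamma_plus r s1 \<noteq> 0"
    using seg unfolding admissible_segment_def Let_def r_def by blast+
  have "t0 \<in> I" using sub t01 by auto
  note right = right_frenet_limits[OF adm this, folded r_def]
  show ?thesis
    using eventually_at_right_real[OF t01]
  proof eventually_elim
    case (elim t)
    then have t: "t \<in> regular_params Q" "\<not> inflection_param r t"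
      using admissible_segment_regular[OF adm seg] nochar[of t]
      by (auto simp: character_param_def r_def)
    note left = left_frenet_at_regular[OF t[unfolded r_def], folded r_def]
    have "alpha_plus r t0 \<bullet> gamma_minus r t \<noteq> 0" "alpha_minus r t \<bullet> gamma_plus r t0 \<noteq> 0"
      using transversal[of t0 t] elim by auto
    then show ?case
      using tet_v1_eq[OF right(1)] tet_v2_eq[of r t t0] left
      by (simp add: dist_norm inner_diff_left minus_divide_left[symmetric])
  qed
qed

lemma outer_edges_tendsto_zero:
  assumes adm: "admissible_curve P Q I" and seg: "admissible_segment P Q I t0 t1"
  defines "r \<equiv> rcurve P Q"
  shows "((\<lambda>t. dist (r t0) (tet_v1 r t0 t)) \<longlongrightarrow> 0) (at_right t0)"
    and "((\<lambda>t. dist (tet_v2 r t0 t) (r t)) \<longlongrightarrow> 0) (at_right t0)"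
proof -
  have "t0 \<in> I" using seg by (auto simp: admissible_segment_def Let_def)
  note right = right_frenet_limits[OF adm this, folded r_def]
  note edges = outer_edges_eq[OF adm seg, folded r_def]
  show "((\<lambda>t. dist (r t0) (tet_v1 r t0 t)) \<longlongrightarrow> 0) (at_right t0)"
  proof (rule Lim_transform_eventually[OF tendsto_mult_left_zero[OF tendsto_rabs_zero[OF right(2)]]])
    show "eventually (\<lambda>t. \<bar>((r t - r t0) \<bullet> ubinormal r t) / (alpha_plus r t0 \<bullet> ubinormal r t)\<bar>
        * norm (alpha_plus r t0) = dist (r t0) (tet_v1 r t0 t)) (at_right t0)"
      using edges by eventually_elim simp
  qed
  show "((\<lambda>t. dist (tet_v2 r t0 t) (r t)) \<longlongrightarrow> 0) (at_right t0)"
  proof (rule Lim_transform_eventually[OF tendsto_rabs_zero[OF right(3)]])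
    show "eventually (\<lambda>t. \<bar>((r t - r t0) \<bullet> gamma_plus r t0) / (utangent r t \<bullet> gamma_plus r t0)\<bar>
        = dist (tet_v2 r t0 t) (r t)) (at_right t0)"
      using edges by eventually_elim simp
  qed
qed

lemma rcurve_dist_tendsto_right:
  assumes "t0 \<in> regular_params Q"
  shows "((\<lambda>t. dist (rcurve P Q t0) (rcurve P Q t)) \<longlongrightarrow> 0) (at_right t0)"
proof -
  have "isCont (rcurve P Q) t0"
    using curve_deriv_isCont[OF assms, of P 0] by (simp add: curve_deriv_0)
  then have "(rcurve P Q \<longlongrightarrow> rcurve P Q t0) (at_right t0)"
    unfolding isCont_def by (rule tendsto_within_subset) simp
  then have "((\<lambda>t. dist (rcurve P Q t0) (rcurve P Q t)) \<longlongrightarrow> dist (rcurve P Q t0) (rcurve P Q t0))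
      (at_right t0)"
    by (intro tendsto_intros)
  then show ?thesis by simp
qed

theorem lemma6:
  fixes P Q :: "3 \<Rightarrow> real poly" and I :: "real set" and t0 t1 :: real
  assumes "admissible_curve P Q I"
    and "admissible_segment P Q I t0 t1"
  shows "((\<lambda>t. dist (rcurve P Q t0) (tet_v1 (rcurve P Q) t0 t)) \<longlongrightarrow> 0) (at_right t0) \<and>
         ((\<lambda>t. dist (tet_v1 (rcurve P Q) t0 t) (tet_v2 (rcurve P Q) t0 t)) \<longlongrightarrow> 0) (at_right t0) \<and>
         ((\<lambda>t. dist (tet_v2 (rcurve P Q) t0 t) (rcurve P Q t)) \<longlongrightarrow> 0) (at_right t0)"
proof -
  note outer = outer_edges_tendsto_zero[OF assms]
  have "t0 \<in> regular_params Q"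
    using admissible_segment_regular[OF assms] assms(2) by (auto simp: admissible_segment_def Let_def)
  then have middle: "((\<lambda>t. dist (tet_v1 (rcurve P Q) t0 t) (tet_v2 (rcurve P Q) t0 t)) \<longlongrightarrow> 0)
      (at_right t0)"
    by (intro dist_tendsto_zero_through[OF outer rcurve_dist_tendsto_right])
  show ?thesis using outer middle by blast
qed

end
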